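(* Let $(N,\langle\cdot,\cdot\rangle,\varphi)$ be a modified $H$-type group (see context) whose metric $\langle\cdot,\cdot\rangle$ is a nilsoliton. Then every trivial central extension of $N$ also admits a nilsoliton; that is, for every finite-dimensional real vector space $\mathfrak m$, the simply connected Lie group $\bar N$ with Lie algebra $\bar{\mathfrak n}=\mathfrak n\oplus\mathfrak m$, bracket $[u+a,w+b]=[u,w]$ ($u,w\in\mathfrak n$, $a,b\in\mathfrak m$), admits a left-invariant pseudo-Riemannian metric with nondegenerate center that is a nilsoliton.
   Context: Let $N$ be a 2-step nilpotent real Lie group with Lie algebra $\mathfrak n$, Lie bracket $[\cdot,\cdot]$ and center $\mathfrak z$, endowed with a left-invariant pseudo-Riemannian metric $\langle\cdot,\cdot\rangle$ for which $\mathfrak z$ is nondegenerate. Put $\mathfrak v=\mathfrak z^\perp$. For $z\in\mathfrak z$ define $j(z)\in\mathrm{End}(\mathfrak v)$ by $\langle [x,y],z\rangle=\langle y,j(z)x\rangle$ for all $x,y\in\mathfrak v$. Given a quadratic form $\varphi$ on $\mathfrak z$, $(N,\langle\cdot,\cdot\rangle,\varphi)$ is a modified $H$-type group if $j(z)^2=-\varphi(z)\,\mathrm{Id}_{\mathfrak v}$ for all $z\in\mathfrak z$. A left-invariant metric on a 2-step nilpotent Lie group with Lie algebra $\mathfrak g$ is a nilsoliton if there is $c\in\mathbb R$ such that $\mathrm{Rc}+c\,\mathrm{Id}_{\mathfrak g}$ is a derivation of $\mathfrak g$, where the Ricci operator $\mathrm{Rc}$ is defined by $\langle\mathrm{Rc}\,u,w\rangle=\mathrm{Ric}(u,w)$.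 *)

theory Defs
  imports "HOL-Analysis.Analysis"
begin

text \<open>Real Lie algebras are modelled on a finite-dimensional real vector space
(type of class euclidean_space; the euclidean inner product is used only to
define traces via an orthonormal basis). A left-invariant pseudo-Riemannian
metric on the simply connected Lie group is the same as a nondegenerate
symmetric bilinear form g on the Lie algebra.\<close>

definition lie_algebra :: "('a::real_vector \<Rightarrow> 'a \<Rightarrow> 'a) \<Rightarrow> bool" where
  "lie_algebra br \<longleftrightarrow> bilinear br \<and> (\<forall>x. br x x = 0) \<and>
     (\<forall>x y z. br x (br y z) + br y (br z x) + br z (br x y) = 0)"

definition two_step_nilpotent :: "('a::real_vector \<Rightarrow> 'a \<Rightarrow> 'a) \<Rightarrow> bool" where
  "two_step_nilpotent br \<longleftrightarrow> lie_algebra br \<and> (\<forall>x y z. br (br x y) z = 0) \<and>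
     (\<exists>x y. br x y \<noteq> 0)"

definition lie_center :: "('a::real_vector \<Rightarrow> 'a \<Rightarrow> 'a) \<Rightarrow> 'a set" where
  "lie_center br = {z. \<forall>x. br z x = 0}"

definition pr_metric :: "('a::real_vector \<Rightarrow> 'a \<Rightarrow> real) \<Rightarrow> bool" where
  "pr_metric g \<longleftrightarrow> bilinear g \<and> (\<forall>x y. g x y = g y x) \<and>
     (\<forall>x. (\<forall>y. g x y = 0) \<longrightarrow> x = 0)"

definition nondeg_on :: "('a::real_vector \<Rightarrow> 'a \<Rightarrow> real) \<Rightarrow> 'a set \<Rightarrow> bool" where
  "nondeg_on g S \<longleftrightarrow> (\<forall>x\<in>S. (\<forall>y\<in>S. g x y = 0) \<longrightarrow> x = 0)"

definition g_perp :: "('a::real_vector \<Rightarrow> 'a \<Rightarrow> real) \<Rightarrow> 'a set \<Rightarrow> 'a set" where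
  "g_perp g S = {x. \<forall>z\<in>S. g x z = 0}"

definition jmap :: "('a::real_vector \<Rightarrow> 'a \<Rightarrow> 'a) \<Rightarrow> ('a \<Rightarrow> 'a \<Rightarrow> real) \<Rightarrow> 'a \<Rightarrow> 'a \<Rightarrow> 'a" where
  "jmap br g z x = (THE w. w \<in> g_perp g (lie_center br) \<and>
      (\<forall>y\<in>g_perp g (lie_center br). g (br x y) z = g y w))"

definition quadratic_form_on :: "'a::real_vector set \<Rightarrow> ('a \<Rightarrow> real) \<Rightarrow> bool" where
  "quadratic_form_on S phi \<longleftrightarrow>
     (\<exists>B::'a \<Rightarrow> 'a \<Rightarrow> real. bilinear B \<and> (\<forall>x y. B x y = B y x) \<and> (\<forall>z\<in>S. phi z = B z z))"

definition modified_H_type ::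
  "('a::real_vector \<Rightarrow> 'a \<Rightarrow> 'a) \<Rightarrow> ('a \<Rightarrow> 'a \<Rightarrow> real) \<Rightarrow> ('a \<Rightarrow> real) \<Rightarrow> bool" where
  "modified_H_type br g phi \<longleftrightarrow>
     two_step_nilpotent br \<and> pr_metric g \<and> nondeg_on g (lie_center br) \<and>
     quadratic_form_on (lie_center br) phi \<and>
     (\<forall>z\<in>lie_center br. \<forall>x\<in>g_perp g (lie_center br).
        jmap br g z (jmap br g z x) = - (phi z) *\<^sub>R x)"

text \<open>Levi-Civita connection of a left-invariant metric (Koszul formula).\<close>
definition lc_conn :: "('a::real_vector \<Rightarrow> 'a \<Rightarrow> 'a) \<Rightarrow> ('a \<Rightarrow> 'a \<Rightarrow> real) \<Rightarrow> 'a \<Rightarrow> 'a \<Rightarrow> 'a" where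
  "lc_conn br g x y = (THE w. \<forall>z. g w z = (g (br x y) z - g (br y z) x + g (br z x) y) / 2)"

definition curv :: "('a::real_vector \<Rightarrow> 'a \<Rightarrow> 'a) \<Rightarrow> ('a \<Rightarrow> 'a \<Rightarrow> real) \<Rightarrow> 'a \<Rightarrow> 'a \<Rightarrow> 'a \<Rightarrow> 'a" where
  "curv br g x y z = lc_conn br g x (lc_conn br g y z) - lc_conn br g y (lc_conn br g x z)
      - lc_conn br g (br x y) z"

definition lin_trace :: "('a::euclidean_space \<Rightarrow> 'a) \<Rightarrow> real" where
  "lin_trace f = (\<Sum>b\<in>Basis. f b \<bullet> b)"

definition ricci :: "('a::euclidean_space \<Rightarrow> 'a \<Rightarrow> 'a) \<Rightarrow> ('a \<Rightarrow> 'a \<Rightarrow> real) \<Rightarrow> 'a \<Rightarrow> 'a \<Rightarrow> real" where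
  "ricci br g u w = lin_trace (\<lambda>x. curv br g x u w)"

definition ricci_op :: "('a::euclidean_space \<Rightarrow> 'a \<Rightarrow> 'a) \<Rightarrow> ('a \<Rightarrow> 'a \<Rightarrow> real) \<Rightarrow> 'a \<Rightarrow> 'a" where
  "ricci_op br g u = (THE v. \<forall>w. g v w = ricci br g u w)"

definition lie_derivation :: "('a::real_vector \<Rightarrow> 'a \<Rightarrow> 'a) \<Rightarrow> ('a \<Rightarrow> 'a) \<Rightarrow> bool" where
  "lie_derivation br D \<longleftrightarrow> linear D \<and> (\<forall>x y. D (br x y) = br (D x) y + br x (D y))"

definition nilsoliton :: "('a::euclidean_space \<Rightarrow> 'a \<Rightarrow> 'a) \<Rightarrow> ('a \<Rightarrow> 'a \<Rightarrow> real) \<Rightarrow> bool" where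
  "nilsoliton br g \<longleftrightarrow> (\<exists>c::real. lie_derivation br (\<lambda>u. ricci_op br g u + c *\<^sub>R u))"

definition trivial_ext :: "('a::real_vector \<Rightarrow> 'a \<Rightarrow> 'a) \<Rightarrow> ('a \<times> 'b::real_vector) \<Rightarrow> ('a \<times> 'b) \<Rightarrow> ('a \<times> 'b)" where
  "trivial_ext br p q = (br (fst p) (fst q), 0)"

end

theory Submission
  imports Defs
begin

text \<open>Give the extension n + m the product of the given metric on n with a Euclidean
metric on m. By the Koszul formula the factor m is flat and orthogonal: the Levi-Civita
connection, the curvature and hence the Ricci operator of the extension are those of n,
extended by zero on m. So if Rc + c Id is a derivation of n, then Rc' + c Id is that
derivation on n plus c Id on m, which is a derivation of the extended bracket because m
is central and never a bracket.\<close>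

lemma pr_metric_bilinear: "pr_metric g \<Longrightarrow> bilinear g"
  by (simp add: pr_metric_def)

lemma pr_metric_left_cancel:
  assumes g: "pr_metric g" and eq: "\<forall>z. g v z = g w z"
  shows "v = w"
proof -
  have "\<forall>z. g (v - w) z = 0"
    using eq by (simp add: bilinear_lsub[OF pr_metric_bilinear[OF g]])
  then show ?thesis
    using g unfolding pr_metric_def by (metis eq_iff_diff_eq_0)
qed

lemma pr_metric_represents:
  fixes g :: "'a::euclidean_space \<Rightarrow> 'a \<Rightarrow> real"
  assumes g: "pr_metric g" and f: "linear f"
  shows "\<exists>w. \<forall>z. g w z = f z"
proof -
  have bg: "bilinear g" using g by (rule pr_metric_bilinear)
  \<comment> \<open>T w is the Euclidean representative of g w; nondegeneracy makes T injective, hence onto.\<close>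
  define T where "T w = adjoint (g w) 1" for w
  have gT: "g w z = z \<bullet> T w" for w z
    using adjoint_works[of "g w" z 1] bg by (simp add: T_def bilinear_def)
  have "linear T"
    by (rule linearI) (simp_all flip: vector_eq_ldot
        add: gT[symmetric] inner_add_right bilinear_ladd[OF bg] bilinear_lmul[OF bg])
  moreover have "inj T"
    by (rule injI, rule pr_metric_left_cancel[OF g]) (simp add: gT)
  ultimately obtain w where "T w = adjoint f 1"
    by (metis linear_injective_imp_surjective surjD)
  then have "g w z = f z" for z
    using adjoint_works[OF f, of z 1] by (simp add: gT)
  then show ?thesis by blast
qed

lemma pr_metric_The_eq:
  assumes "pr_metric g" and "\<forall>z. g w z = f z"
  shows "(THE w. \<forall>z. g w z = f z) = w"
  using assms by (intro the_equality) (auto intro: pr_metric_left_cancel)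

lemma pr_metric_The_represents:
  fixes g :: "'a::euclidean_space \<Rightarrow> 'a \<Rightarrow> real"
  assumes "pr_metric g" and "linear f"
  shows "g (THE w. \<forall>z. g w z = f z) z = f z"
  using pr_metric_represents[OF assms] pr_metric_The_eq[OF assms(1)] by metis

definition koszul ::
  "('a::real_vector \<Rightarrow> 'a \<Rightarrow> 'a) \<Rightarrow> ('a \<Rightarrow> 'a \<Rightarrow> real) \<Rightarrow> 'a \<Rightarrow> 'a \<Rightarrow> 'a \<Rightarrow> real" where
  "koszul br g x y z = (g (br x y) z - g (br y z) x + g (br z x) y) / 2"

lemma lc_conn_eq_The_koszul: "lc_conn br g x y = (THE w. \<forall>z. g w z = koszul br g x y z)"
  by (simp add: lc_conn_def koszul_def)

lemma linear_koszul_right: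
  assumes "bilinear br" and "bilinear g"
  shows "linear (koszul br g x y)"
  using assms by (intro linearI)
    (simp_all add: koszul_def bilinear_ladd bilinear_radd bilinear_lmul bilinear_rmul field_simps)

lemma linear_koszul_mid:
  assumes "bilinear br" and "bilinear g"
  shows "linear (\<lambda>y. koszul br g x y z)"
  using assms by (intro linearI)
    (simp_all add: koszul_def bilinear_ladd bilinear_radd bilinear_lmul bilinear_rmul field_simps)

lemma lc_conn_koszul:
  fixes br :: "'a::euclidean_space \<Rightarrow> 'a \<Rightarrow> 'a"
  assumes br: "bilinear br" and g: "pr_metric g"
  shows "g (lc_conn br g x y) z = koszul br g x y z"
  using g by (simp add: lc_conn_eq_The_koszul pr_metric_The_represents linear_koszul_right br
      pr_metric_bilinear)

lemma lc_conn_eqI: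
  assumes "pr_metric g" and "\<forall>z. g w z = koszul br g x y z"
  shows "lc_conn br g x y = w"
  using assms by (simp add: lc_conn_eq_The_koszul pr_metric_The_eq)

lemma linear_lc_conn:
  fixes br :: "'a::euclidean_space \<Rightarrow> 'a \<Rightarrow> 'a"
  assumes br: "bilinear br" and g: "pr_metric g"
  shows "linear (lc_conn br g x)"
proof -
  have bg: "bilinear g" using g by (rule pr_metric_bilinear)
  interpret koszul: linear "\<lambda>y. koszul br g x y z" for z
    by (rule linear_koszul_mid[OF br bg])
  show ?thesis
    by (intro linearI lc_conn_eqI[OF g] allI)
      (simp_all add: bilinear_ladd[OF bg] bilinear_lmul[OF bg] lc_conn_koszul[OF br g]
        koszul.add koszul.scale)
qed

lemma linear_curv:
  fixes br :: "'a::euclidean_space \<Rightarrow> 'a \<Rightarrow> 'a"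
  assumes "bilinear br" and "pr_metric g"
  shows "linear (curv br g x y)"
proof -
  interpret lc: linear "lc_conn br g v" for v
    by (rule linear_lc_conn[OF assms])
  show ?thesis
    by (intro linearI) (simp_all add: curv_def lc.add lc.scale algebra_simps)
qed

lemma linear_ricci:
  fixes br :: "'a::euclidean_space \<Rightarrow> 'a \<Rightarrow> 'a"
  assumes "bilinear br" and "pr_metric g"
  shows "linear (ricci br g u)"
proof -
  interpret curv: linear "curv br g x u" for x
    by (rule linear_curv[OF assms])
  show ?thesis
    by (intro linearI) (simp_all add: ricci_def lin_trace_def curv.add curv.scale
        inner_add_left sum.distrib sum_distrib_left)
qed

lemma ricci_op_ricci:
  fixes br :: "'a::euclidean_space \<Rightarrow> 'a \<Rightarrow> 'a"
  assumes "bilinear br" and "pr_metric g"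
  shows "g (ricci_op br g u) w = ricci br g u w"
  unfolding ricci_op_def using assms by (simp add: pr_metric_The_represents linear_ricci)

definition prod_metric ::
  "('a::real_vector \<Rightarrow> 'a \<Rightarrow> real) \<Rightarrow> ('a \<times> 'b::real_inner) \<Rightarrow> ('a \<times> 'b) \<Rightarrow> real" where
  "prod_metric g p q = g (fst p) (fst q) + snd p \<bullet> snd q"

lemma bilinear_prod_metric:
  assumes "bilinear g"
  shows "bilinear (prod_metric g)"
  unfolding bilinear_def
  by (auto intro!: linearI simp: prod_metric_def bilinear_ladd[OF assms] bilinear_radd[OF assms]
      bilinear_lmul[OF assms] bilinear_rmul[OF assms] inner_add_left inner_add_right algebra_simps)

lemma nondeg_on_prod_metric:
  assumes g: "bilinear g" and nd: "nondeg_on g S" and "0 \<in> S"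
  shows "nondeg_on (prod_metric g) (S \<times> UNIV)"
  unfolding nondeg_on_def
proof (intro ballI impI)
  fix p assume p: "p \<in> S \<times> UNIV" and orth: "\<forall>q\<in>S \<times> UNIV. prod_metric g p q = 0"
  have "g (fst p) w = 0" if "w \<in> S" for w
    using orth[rule_format, of "(w, 0)"] that by (simp add: prod_metric_def)
  then have "fst p = 0"
    using nd p unfolding nondeg_on_def by auto
  moreover have "snd p \<bullet> snd p = 0"
    using orth[rule_format, of "(0, snd p)"] \<open>0 \<in> S\<close> \<open>fst p = 0\<close>
    by (simp add: prod_metric_def bilinear_lzero[OF g])
  ultimately show "p = 0"
    by (simp add: prod_eq_iff)
qed

lemma pr_metric_prod_metric:
  assumes "pr_metric g"
  shows "pr_metric (prod_metric g)"
proof -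
  have g: "bilinear g" "\<And>x y. g x y = g y x" "nondeg_on g UNIV"
    using assms by (auto simp: pr_metric_def nondeg_on_def)
  then have "nondeg_on (prod_metric g) (UNIV \<times> UNIV)"
    by (intro nondeg_on_prod_metric) auto
  with g show ?thesis
    by (auto simp: pr_metric_def nondeg_on_def bilinear_prod_metric prod_metric_def inner_commute)
qed

lemma lie_center_trivial_ext: "lie_center (trivial_ext br) = lie_center br \<times> UNIV"
  by (auto simp: lie_center_def trivial_ext_def prod_eq_iff)

lemma lc_conn_trivial_ext:
  fixes br :: "'a::euclidean_space \<Rightarrow> 'a \<Rightarrow> 'a"
  assumes "bilinear br" and "pr_metric g"
  shows "lc_conn (trivial_ext br) (prod_metric g :: 'a \<times> 'b::euclidean_space \<Rightarrow> _) p q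
       = (lc_conn br g (fst p) (fst q), 0)"
  using assms by (intro lc_conn_eqI pr_metric_prod_metric)
    (simp_all add: prod_metric_def lc_conn_koszul koszul_def trivial_ext_def)

lemma curv_trivial_ext:
  fixes br :: "'a::euclidean_space \<Rightarrow> 'a \<Rightarrow> 'a"
  assumes "bilinear br" and "pr_metric g"
  shows "curv (trivial_ext br) (prod_metric g :: 'a \<times> 'b::euclidean_space \<Rightarrow> _) p q r
       = (curv br g (fst p) (fst q) (fst r), 0)"
  using assms by (simp add: curv_def lc_conn_trivial_ext trivial_ext_def)

lemma lin_trace_extend_by_zero:
  "lin_trace (\<lambda>p :: 'a::euclidean_space \<times> 'b::euclidean_space. (f (fst p), 0)) = lin_trace f"
proof -
  have inj: "inj_on (\<lambda>u. (u, 0 :: 'b)) Basis" "inj_on (\<lambda>v. (0 :: 'a, v)) Basis"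
    by (auto intro: inj_onI)
  show ?thesis
    unfolding lin_trace_def Basis_prod_def
    by (subst sum.union_disjoint) (auto simp: sum.reindex[OF inj(1)] sum.reindex[OF inj(2)])
qed

lemma ricci_trivial_ext:
  fixes br :: "'a::euclidean_space \<Rightarrow> 'a \<Rightarrow> 'a"
  assumes "bilinear br" and "pr_metric g"
  shows "ricci (trivial_ext br) (prod_metric g :: 'a \<times> 'b::euclidean_space \<Rightarrow> _) p q
       = ricci br g (fst p) (fst q)"
  unfolding ricci_def curv_trivial_ext[OF assms] by (rule lin_trace_extend_by_zero)

lemma ricci_op_trivial_ext:
  fixes br :: "'a::euclidean_space \<Rightarrow> 'a \<Rightarrow> 'a"
  assumes "bilinear br" and "pr_metric g"
  shows "ricci_op (trivial_ext br) (prod_metric g :: 'a \<times> 'b::euclidean_space \<Rightarrow> _) p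
       = (ricci_op br g (fst p), 0)"
  unfolding ricci_op_def[of "trivial_ext br"] using assms
  by (intro pr_metric_The_eq pr_metric_prod_metric)
    (simp_all add: prod_metric_def ricci_op_ricci ricci_trivial_ext)

lemma lie_derivation_trivial_ext:
  assumes "lie_derivation br D" and "linear E"
  shows "lie_derivation (trivial_ext br) (\<lambda>p. (D (fst p), E (snd p)))"
  using assms unfolding lie_derivation_def
  by (auto intro!: linearI simp: linear_add linear_scale linear_0 trivial_ext_def)

lemma nilsoliton_trivial_ext:
  fixes br :: "'a::euclidean_space \<Rightarrow> 'a \<Rightarrow> 'a"
  assumes br: "bilinear br" and g: "pr_metric g" and "nilsoliton br g"
  shows "nilsoliton (trivial_ext br) (prod_metric g :: 'a \<times> 'b::euclidean_space \<Rightarrow> _)"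
proof -
  obtain c where "lie_derivation br (\<lambda>u. ricci_op br g u + c *\<^sub>R u)"
    using \<open>nilsoliton br g\<close> unfolding nilsoliton_def by blast
  then have "lie_derivation (trivial_ext br)
      (\<lambda>p. (ricci_op br g (fst p) + c *\<^sub>R fst p, c *\<^sub>R snd p :: 'b))"
    by (rule lie_derivation_trivial_ext) (rule linear_scaleR)
  moreover have "(ricci_op br g (fst p) + c *\<^sub>R fst p, c *\<^sub>R snd p)
      = ricci_op (trivial_ext br) (prod_metric g) p + c *\<^sub>R p" for p :: "'a \<times> 'b"
    by (simp add: ricci_op_trivial_ext[OF br g] prod_eq_iff)
  ultimately show ?thesis
    unfolding nilsoliton_def by auto
qed

lemma nondeg_on_lie_center_trivial_ext:
  assumes "bilinear br" and "bilinear g" and "nondeg_on g (lie_center br)"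
  shows "nondeg_on (prod_metric g) (lie_center (trivial_ext br))"
  unfolding lie_center_trivial_ext using assms
  by (intro nondeg_on_prod_metric) (auto simp: lie_center_def bilinear_lzero)

theorem corollary4p12:
  fixes br :: "'a::euclidean_space \<Rightarrow> 'a \<Rightarrow> 'a"
    and g :: "'a \<Rightarrow> 'a \<Rightarrow> real"
    and phi :: "'a \<Rightarrow> real"
  assumes "modified_H_type br g phi"
    and "nilsoliton br g"
  shows "\<exists>g' :: ('a \<times> 'b::euclidean_space) \<Rightarrow> ('a \<times> 'b) \<Rightarrow> real.
           pr_metric g' \<and> nondeg_on g' (lie_center (trivial_ext br)) \<and>
           nilsoliton (trivial_ext br) g'"
proof -
  have br: "bilinear br" and g: "pr_metric g" and center: "nondeg_on g (lie_center br)"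
    using assms(1)
    by (simp_all add: modified_H_type_def two_step_nilpotent_def lie_algebra_def)
  show ?thesis
    using br g pr_metric_bilinear[OF g] center assms(2)
    by (intro exI[of _ "prod_metric g"] conjI pr_metric_prod_metric
        nondeg_on_lie_center_trivial_ext nilsoliton_trivial_ext)
qed

end
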